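(* Let $\mathbb{F}$ be a field of characteristic not $2$, let $V$ be a $2$-dimensional $\mathbb{F}$-space with basis $u,v$ and symmetric bilinear form $B$ with $B(u,u)=B(v,v)=1$, $B(u,v)=\delta$, and let $\mathfrak{S}(\delta)=\mathbb{F}\oplus V$ with product $(\alpha+x)(\beta+y)=(\alpha\beta+B(x,y))+(\alpha y+\beta x)$. Put $a=\frac12(1+u)$ and $b=\frac12(1+v)$. Then: (a) $a$ and $b$ generate $\mathfrak{S}(\delta)$ if and only if $\delta\neq 1$; in this case $\mathfrak{S}(\delta)\cong\mathfrak{J}(\frac12(1+\delta))$ via an isomorphism sending the generators $\mathfrak{a},\mathfrak{b}$ of $\mathfrak{J}$ to $a,b$; (b) if $\delta=1$ then $\langle\langle a,b\rangle\rangle=\mathrm{span}\{a,b\}$ is a $2$-dimensional subalgebra isomorphic to $\mathfrak{J}(1)/\langle\sigma\rangle$ via an isomorphism sending the images of $\mathfrak{a},\mathfrak{b}$ to $a,b$.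
   Context: For $\alpha\in\mathbb{F}$, $\mathfrak{J}(\alpha)$ is the commutative algebra with basis $\mathfrak{a},\mathfrak{b},\sigma$ and product $\mathfrak{a}^2=\mathfrak{a}$, $\mathfrak{b}^2=\mathfrak{b}$, $\mathfrak{a}\mathfrak{b}=\frac12\mathfrak{a}+\frac12\mathfrak{b}+\sigma$, $\mathfrak{a}\sigma=\frac{\alpha-1}{2}\mathfrak{a}$, $\mathfrak{b}\sigma=\frac{\alpha-1}{2}\mathfrak{b}$, $\sigma^2=\frac{\alpha-1}{2}\sigma$. In $\mathfrak{J}(1)$, $\langle\sigma\rangle$ is an ideal (it annihilates the algebra). $\langle\langle a,b\rangle\rangle$ denotes the subalgebra generated by $a,b$. *)

theory Defs
  imports Main
begin

type_synonym 'a tri = "'a \<times> 'a \<times> 'a"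

definition tadd :: "'a::field tri \<Rightarrow> 'a tri \<Rightarrow> 'a tri" where
  "tadd x y = (case x of (x1,x2,x3) \<Rightarrow> case y of (y1,y2,y3) \<Rightarrow> (x1+y1, x2+y2, x3+y3))"

definition tsmul :: "'a::field \<Rightarrow> 'a tri \<Rightarrow> 'a tri" where
  "tsmul c x = (case x of (x1,x2,x3) \<Rightarrow> (c*x1, c*x2, c*x3))"

text \<open>An element (al, x1, x2) stands for al*1 + x1*u + x2*v.
  B is the symmetric bilinear form with B(u,u)=B(v,v)=1, B(u,v)=delta.\<close>

definition Bform :: "'a::field \<Rightarrow> 'a \<times> 'a \<Rightarrow> 'a \<times> 'a \<Rightarrow> 'a" where
  "Bform d x y = (case x of (x1,x2) \<Rightarrow> case y of (y1,y2) \<Rightarrow>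
      x1*y1 + x2*y2 + d*(x1*y2 + x2*y1))"

definition smul_S :: "'a::field \<Rightarrow> 'a tri \<Rightarrow> 'a tri \<Rightarrow> 'a tri" where
  "smul_S d p q = (case p of (al,x1,x2) \<Rightarrow> case q of (be,y1,y2) \<Rightarrow>
      (al*be + Bform d (x1,x2) (y1,y2), al*y1 + be*x1, al*y2 + be*x2))"

definition S_a :: "'a::field tri" where "S_a = (1/2, 1/2, 0)"
definition S_b :: "'a::field tri" where "S_b = (1/2, 0, 1/2)"

definition J_a :: "'a::field tri" where "J_a = (1,0,0)"
definition J_b :: "'a::field tri" where "J_b = (0,1,0)"
definition J_s :: "'a::field tri" where "J_s = (0,0,1)"

text \<open>Bilinear (commutative) extension of the basis products:
  aa = a, bb = b, ab = a/2 + b/2 + sigma, a sigma = (al-1)/2 a,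
  b sigma = (al-1)/2 b, sigma sigma = (al-1)/2 sigma.\<close>
definition jmul :: "'a::field \<Rightarrow> 'a tri \<Rightarrow> 'a tri \<Rightarrow> 'a tri" where
  "jmul al p q = (case p of (p1,p2,p3) \<Rightarrow> case q of (q1,q2,q3) \<Rightarrow>
     tadd (tsmul (p1*q1) J_a)
    (tadd (tsmul (p2*q2) J_b)
    (tadd (tsmul (p1*q2 + p2*q1) (tadd (tsmul (1/2) J_a) (tadd (tsmul (1/2) J_b) J_s)))
    (tadd (tsmul (p1*q3 + p3*q1) (tsmul ((al-1)/2) J_a))
    (tadd (tsmul (p2*q3 + p3*q2) (tsmul ((al-1)/2) J_b))
          (tsmul (p3*q3) (tsmul ((al-1)/2) J_s)))))))"

inductive_set gen_subalg :: "('a::field tri \<Rightarrow> 'a tri \<Rightarrow> 'a tri) \<Rightarrow> 'a tri \<Rightarrow> 'a tri \<Rightarrow> 'a tri set"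
  for mul x y where
  gen_x: "x \<in> gen_subalg mul x y"
| gen_y: "y \<in> gen_subalg mul x y"
| gen_add: "p \<in> gen_subalg mul x y \<Longrightarrow> q \<in> gen_subalg mul x y \<Longrightarrow> tadd p q \<in> gen_subalg mul x y"
| gen_smul: "p \<in> gen_subalg mul x y \<Longrightarrow> tsmul c p \<in> gen_subalg mul x y"
| gen_mul: "p \<in> gen_subalg mul x y \<Longrightarrow> q \<in> gen_subalg mul x y \<Longrightarrow> mul p q \<in> gen_subalg mul x y"

definition alg_iso ::
  "('b \<Rightarrow> 'c) \<Rightarrow> 'b set \<Rightarrow> ('b \<Rightarrow> 'b \<Rightarrow> 'b) \<Rightarrow> ('k \<Rightarrow> 'b \<Rightarrow> 'b) \<Rightarrow> ('b \<Rightarrow> 'b \<Rightarrow> 'b)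
   \<Rightarrow> 'c set \<Rightarrow> ('c \<Rightarrow> 'c \<Rightarrow> 'c) \<Rightarrow> ('k \<Rightarrow> 'c \<Rightarrow> 'c) \<Rightarrow> ('c \<Rightarrow> 'c \<Rightarrow> 'c) \<Rightarrow> bool" where
  "alg_iso f A addA smulA mulA C addC smulC mulC \<longleftrightarrow>
     bij_betw f A C \<and>
     (\<forall>x\<in>A. \<forall>y\<in>A. f (addA x y) = addC (f x) (f y)) \<and>
     (\<forall>c. \<forall>x\<in>A. f (smulA c x) = smulC c (f x)) \<and>
     (\<forall>x\<in>A. \<forall>y\<in>A. f (mulA x y) = mulC (f x) (f y))"

definition J_coset :: "'a::field tri \<Rightarrow> 'a tri set" where
  "J_coset x = {tadd x (tsmul t J_s) | t. True}"

definition Jq_carrier :: "'a::field tri set set" where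
  "Jq_carrier = range J_coset"

definition Jq_add :: "'a::field tri set \<Rightarrow> 'a tri set \<Rightarrow> 'a tri set" where
  "Jq_add X Y = J_coset (tadd (SOME x. x \<in> X) (SOME y. y \<in> Y))"

definition Jq_smul :: "'a::field \<Rightarrow> 'a tri set \<Rightarrow> 'a tri set" where
  "Jq_smul c X = J_coset (tsmul c (SOME x. x \<in> X))"

definition Jq_mul :: "'a::field tri set \<Rightarrow> 'a tri set \<Rightarrow> 'a tri set" where
  "Jq_mul X Y = J_coset (jmul 1 (SOME x. x \<in> X) (SOME y. y \<in> Y))"

end

theory Submission
  imports Defs
begin

text \<open>The linear map \<open>J(\<alpha>) \<rightarrow> S(\<delta>)\<close> sending \<open>\<aa>, \<bb>\<close> to \<open>a, b\<close> and
  \<open>\<sigma> = \<aa>\<bb> - \<aa>/2 - \<bb>/2\<close> to \<open>ab - a/2 - b/2 = (\<delta> - 1)/4 \<cdot> 1\<close> is an algebra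
  homomorphism for \<open>\<alpha> = (1 + \<delta>)/2\<close>. As \<open>\<aa>, \<bb>\<close> generate \<open>J(\<alpha>)\<close>, the subalgebra
  generated by \<open>a, b\<close> is the image of this map. For \<open>\<delta> \<noteq> 1\<close> the map is bijective;
  for \<open>\<delta> = 1\<close> its kernel is \<open>\<langle>\<sigma>\<rangle>\<close> and its image is \<open>span{a, b}\<close>, which yields
  the isomorphism with \<open>J(1)/\<langle>\<sigma>\<rangle>\<close>.\<close>

lemma tadd_triple [simp]: "tadd (x1, x2, x3) (y1, y2, y3) = (x1 + y1, x2 + y2, x3 + y3)"
  by (simp add: tadd_def)

lemma tsmul_triple [simp]: "tsmul c (x1, x2, x3) = (c * x1, c * x2, c * x3)"
  by (simp add: tsmul_def)

lemma smul_S_triple [simp]: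
  "smul_S d (al, x1, x2) (be, y1, y2) =
     (al * be + x1 * y1 + x2 * y2 + d * (x1 * y2 + x2 * y1), al * y1 + be * x1, al * y2 + be * x2)"
  by (simp add: smul_S_def Bform_def add.assoc)

lemma jmul_triple [simp]:
  "jmul al (p1, p2, p3) (q1, q2, q3) =
     (p1 * q1 + (p1 * q2 + p2 * q1) / 2 + (p1 * q3 + p3 * q1) * ((al - 1) / 2),
      p2 * q2 + (p1 * q2 + p2 * q1) / 2 + (p2 * q3 + p3 * q2) * ((al - 1) / 2),
      p1 * q2 + p2 * q1 + p3 * q3 * ((al - 1) / 2))"
  by (simp add: jmul_def J_a_def J_b_def J_s_def algebra_simps)

lemma gen_subalg_image:
  assumes add: "\<And>p q. h (tadd p q) = tadd (h p) (h q)"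
    and smul: "\<And>c p. h (tsmul c p) = tsmul c (h p)"
    and mult: "\<And>p q. h (mulA p q) = mulC (h p) (h q)"
  shows "h ` gen_subalg mulA x y = gen_subalg mulC (h x) (h y)"
proof
  have "h p \<in> gen_subalg mulC (h x) (h y)" if "p \<in> gen_subalg mulA x y" for p
    using that by induction (auto simp: add smul mult intro: gen_subalg.intros)
  then show "h ` gen_subalg mulA x y \<subseteq> gen_subalg mulC (h x) (h y)"
    by blast
  show "gen_subalg mulC (h x) (h y) \<subseteq> h ` gen_subalg mulA x y"
  proof
    fix z assume "z \<in> gen_subalg mulC (h x) (h y)"
    then show "z \<in> h ` gen_subalg mulA x y"
    proof induction
      case (gen_add p q)
      then obtain p' q' where "p' \<in> gen_subalg mulA x y" "q' \<in> gen_subalg mulA x y"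
        and "p = h p'" "q = h q'" by blast
      then show ?case by (metis add gen_subalg.gen_add image_eqI)
    next
      case (gen_smul p c)
      then obtain p' where "p' \<in> gen_subalg mulA x y" and "p = h p'" by blast
      then show ?case by (metis smul gen_subalg.gen_smul image_eqI)
    next
      case (gen_mul p q)
      then obtain p' q' where "p' \<in> gen_subalg mulA x y" "q' \<in> gen_subalg mulA x y"
        and "p = h p'" "q = h q'" by blast
      then show ?case by (metis mult gen_subalg.gen_mul image_eqI)
    qed (auto intro: gen_subalg.intros)
  qed
qed

lemma gen_subalg_J_eq_UNIV: "gen_subalg (jmul al) J_a J_b = UNIV"
proof -
  have "p \<in> gen_subalg (jmul al) J_a J_b" for p :: "'a tri"
  proof -
    obtain p1 p2 p3 where p: "p = (p1, p2, p3)" by (cases p)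
    have "jmul al J_a J_b = (1/2, 1/2, 1)" by (simp add: J_a_def J_b_def)
    then have "p = tadd (tsmul (p1 - p3/2) J_a)
                   (tadd (tsmul (p2 - p3/2) J_b) (tsmul p3 (jmul al J_a J_b)))"
      by (simp add: p J_a_def J_b_def algebra_simps)
    then show ?thesis by (metis gen_subalg.intros)
  qed
  then show ?thesis by blast
qed

definition J_to_S :: "'a::field \<Rightarrow> 'a tri \<Rightarrow> 'a tri" where
  "J_to_S d = (\<lambda>(p1, p2, p3). (p1/2 + p2/2 + p3 * ((d - 1)/4), p1/2, p2/2))"

lemma J_to_S_triple: "J_to_S d (p1, p2, p3) = (p1/2 + p2/2 + p3 * ((d - 1)/4), p1/2, p2/2)"
  by (simp add: J_to_S_def)

lemma J_to_S_J_a [simp]: "J_to_S d J_a = S_a"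
  and J_to_S_J_b [simp]: "J_to_S d J_b = S_b"
  by (simp_all add: J_to_S_triple J_a_def J_b_def S_a_def S_b_def)

lemma J_to_S_tadd: "J_to_S d (tadd p q) = tadd (J_to_S d p) (J_to_S d q)"
  by (cases p; cases q) (simp add: J_to_S_triple add_divide_distrib distrib_right)

lemma J_to_S_tsmul: "J_to_S d (tsmul c p) = tsmul c (J_to_S d p)"
  by (cases p) (simp add: J_to_S_triple algebra_simps)

lemma J_to_S_mult:
  fixes d :: "'a::field"
  assumes "(2::'a) \<noteq> 0"
  shows "J_to_S d (jmul ((1 + d)/2) p q) = smul_S d (J_to_S d p) (J_to_S d q)"
proof -
  obtain p1 p2 p3 where p: "p = (p1, p2, p3)" by (cases p)
  obtain q1 q2 q3 where q: "q = (q1, q2, q3)" by (cases q)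
  txt \<open>With \<open>1/2\<close> replaced by an \<open>h\<close> satisfying \<open>2 h = 1\<close>, each coordinate becomes a
    polynomial identity modulo that relation.\<close>
  define h where "h = (1::'a) / 2"
  have h2: "2 * h = 1" using assms by (simp add: h_def)
  have div2: "x / 2 = x * h" for x :: 'a by (simp add: h_def)
  have div4: "x / 4 = x * h * h" for x :: 'a using assms by (simp add: h_def)
  show ?thesis
    unfolding p q J_to_S_triple jmul_triple smul_S_triple prod.inject div4 div2
    using h2 by (intro conjI; algebra)
qed

lemma gen_subalg_S_eq_range_J_to_S:
  fixes d :: "'a::field"
  assumes "(2::'a) \<noteq> 0"
  shows "gen_subalg (smul_S d) S_a S_b = range (J_to_S d)"
  using gen_subalg_image[of "J_to_S d" "jmul ((1 + d)/2)" "smul_S d" J_a J_b]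
  by (simp add: J_to_S_tadd J_to_S_tsmul J_to_S_mult[OF assms] gen_subalg_J_eq_UNIV)

lemma bij_J_to_S:
  fixes d :: "'a::field"
  assumes "(2::'a) \<noteq> 0" and "d \<noteq> 1"
  shows "bij (J_to_S d)"
proof -
  define c where "c = (d - 1) / (4::'a)"
  have "(4::'a) \<noteq> 0" using assms mult_eq_0_iff[of "2::'a" 2] by simp
  then have "c \<noteq> 0" using assms by (simp add: c_def)
  have J_to_S_c: "J_to_S d (p1, p2, p3) = (p1/2 + p2/2 + p3 * c, p1/2, p2/2)" for p1 p2 p3
    by (simp add: J_to_S_triple c_def)
  define g where "g = (\<lambda>(al, x1, x2). (2 * x1, 2 * x2, (al - x1 - x2) / c))"
  have "g (J_to_S d (p1, p2, p3)) = (p1, p2, p3)" for p1 p2 p3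
    using assms \<open>c \<noteq> 0\<close> by (simp add: J_to_S_c g_def)
  moreover have "J_to_S d (g (al, x1, x2)) = (al, x1, x2)" for al x1 x2
    using assms \<open>c \<noteq> 0\<close> by (simp add: J_to_S_c g_def)
  ultimately show ?thesis
    by (intro bij_betw_byWitness[where f' = g]) auto
qed

lemma alg_iso_J_to_S:
  fixes d :: "'a::field"
  assumes "(2::'a) \<noteq> 0" and "d \<noteq> 1"
  shows "alg_iso (J_to_S d) UNIV tadd tsmul (jmul ((1 + d)/2)) UNIV tadd tsmul (smul_S d)"
  unfolding alg_iso_def
  using bij_J_to_S[OF assms] J_to_S_tadd J_to_S_tsmul J_to_S_mult[OF assms(1)] by blast

lemma gen_subalg_S_eq_UNIV:
  fixes d :: "'a::field"
  assumes "(2::'a) \<noteq> 0" and "d \<noteq> 1"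
  shows "gen_subalg (smul_S d) S_a S_b = UNIV"
  using bij_J_to_S[OF assms] gen_subalg_S_eq_range_J_to_S[OF assms(1)]
  by (simp add: bij_betw_def)

lemma J_to_S_1_triple: "J_to_S 1 (s, t, r) = tadd (tsmul s S_a) (tsmul t S_b)"
  by (simp add: J_to_S_triple S_a_def S_b_def)

lemma range_J_to_S_1: "range (J_to_S 1) = {tadd (tsmul s S_a) (tsmul t S_b) | s t. True}"
proof (intro set_eqI iffI)
  fix z :: "'a tri"
  assume "z \<in> range (J_to_S 1)"
  then obtain s t r where "z = J_to_S 1 (s, t, r)" by (metis prod_cases3 rangeE)
  then show "z \<in> {tadd (tsmul s S_a) (tsmul t S_b) | s t. True}"
    unfolding J_to_S_1_triple by blast
next
  fix z :: "'a tri"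
  assume "z \<in> {tadd (tsmul s S_a) (tsmul t S_b) | s t. True}"
  then obtain s t where "z = tadd (tsmul s S_a) (tsmul t S_b)" by blast
  then show "z \<in> range (J_to_S 1)" by (metis J_to_S_1_triple rangeI)
qed

lemma gen_subalg_S_1_eq_span:
  assumes "(2::'a::field) \<noteq> 0"
  shows "gen_subalg (smul_S (1::'a)) S_a S_b = {tadd (tsmul s S_a) (tsmul t S_b) | s t. True}"
  using gen_subalg_S_eq_range_J_to_S[OF assms] range_J_to_S_1 by simp

lemma span_S_a_S_b_ne_UNIV:
  assumes "(2::'a::field) \<noteq> 0"
  shows "{tadd (tsmul s S_a) (tsmul t S_b) | s t. True} \<noteq> (UNIV :: 'a tri set)"
proof -
  have "(1, 0, 0) \<notin> range (J_to_S (1::'a))"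
    using assms by (auto simp: J_to_S_triple)
  then show ?thesis
    unfolding range_J_to_S_1 by blast
qed

lemma S_a_S_b_independent:
  assumes "(2::'a::field) \<noteq> 0"
  shows "tadd (tsmul s S_a) (tsmul t S_b) = (0, 0, 0) \<Longrightarrow> s = 0 \<and> (t::'a) = 0"
  using assms by (simp add: S_a_def S_b_def)

lemma mem_J_coset_iff: "x \<in> J_coset p \<longleftrightarrow> fst x = fst p \<and> fst (snd x) = fst (snd p)"
proof -
  obtain x1 x2 x3 where x: "x = (x1, x2, x3)" by (cases x)
  obtain p1 p2 p3 where p: "p = (p1, p2, p3)" by (cases p)
  show ?thesis unfolding x p J_coset_def J_s_def
    by (auto intro: exI[where x="x3 - p3"])
qed

lemma J_coset_eq_iff: "J_coset p = J_coset q \<longleftrightarrow> fst p = fst q \<and> fst (snd p) = fst (snd q)"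
proof
  assume "J_coset p = J_coset q"
  moreover have "p \<in> J_coset p" by (simp add: mem_J_coset_iff)
  ultimately show "fst p = fst q \<and> fst (snd p) = fst (snd q)" by (simp add: mem_J_coset_iff)
qed (simp add: set_eq_iff mem_J_coset_iff)

lemma J_to_S_1_eq_iff:
  assumes "(2::'a::field) \<noteq> 0"
  shows "J_to_S 1 p = J_to_S 1 q \<longleftrightarrow> J_coset p = J_coset (q :: 'a tri)"
  using assms by (cases p; cases q) (auto simp: J_to_S_triple J_coset_eq_iff)

lemma Jq_alg_iso_range:
  assumes kernel: "\<And>p q. h p = h q \<longleftrightarrow> J_coset p = J_coset q"
    and add: "\<And>p q. h (tadd p q) = addC (h p) (h q)"
    and smul: "\<And>c p. h (tsmul c p) = smulC c (h p)"
    and mult: "\<And>p q. h (jmul 1 p q) = mulC (h p) (h q)"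
  shows "\<exists>f. alg_iso f Jq_carrier Jq_add Jq_smul Jq_mul (range h) addC smulC mulC
           \<and> (\<forall>p. f (J_coset p) = h p)"
proof -
  define F where "F = (\<lambda>X. h (SOME x. x \<in> X))"
  have F_J_coset: "F (J_coset p) = h p" for p
  proof -
    have "(SOME x. x \<in> J_coset p) \<in> J_coset p"
      by (rule someI[of _ p]) (simp add: mem_J_coset_iff)
    then show ?thesis by (simp add: F_def kernel J_coset_eq_iff mem_J_coset_iff)
  qed
  have "inj_on F Jq_carrier"
    by (auto simp: inj_on_def Jq_carrier_def F_J_coset kernel)
  moreover have "F ` Jq_carrier = range h"
    by (simp add: Jq_carrier_def image_image F_J_coset)
  moreover have "F (Jq_add X Y) = addC (F X) (F Y)"
    and "F (Jq_smul c X) = smulC c (F X)"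
    and "F (Jq_mul X Y) = mulC (F X) (F Y)" for X Y c
    unfolding Jq_add_def Jq_smul_def Jq_mul_def F_J_coset by (simp_all add: add smul mult F_def)
  ultimately show ?thesis
    using F_J_coset by (auto simp: alg_iso_def bij_betw_def)
qed

lemma Jq_alg_iso_span:
  assumes "(2::'a::field) \<noteq> 0"
  shows "\<exists>f. alg_iso f Jq_carrier Jq_add Jq_smul Jq_mul
               {tadd (tsmul s S_a) (tsmul t S_b) | s t. True} tadd tsmul (smul_S (1::'a))
           \<and> f (J_coset J_a) = S_a \<and> f (J_coset J_b) = S_b"
proof -
  have "J_to_S 1 (jmul 1 p q) = smul_S 1 (J_to_S 1 p) (J_to_S 1 q)" for p q :: "'a tri"
    using J_to_S_mult[OF assms, of 1] assms by simp
  then obtain f where iso: "alg_iso f Jq_carrier Jq_add Jq_smul Jq_mul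
      (range (J_to_S 1)) tadd tsmul (smul_S (1::'a))" and f: "\<forall>p. f (J_coset p) = J_to_S 1 p"
    using Jq_alg_iso_range[OF J_to_S_1_eq_iff[OF assms] J_to_S_tadd J_to_S_tsmul] by blast
  have "f (J_coset J_a) = S_a" "f (J_coset J_b) = S_b"
    by (simp_all only: f J_to_S_J_a J_to_S_J_b)
  with iso show ?thesis
    unfolding range_J_to_S_1 by blast
qed

theorem proposition3p4:
  fixes d :: "'a::field"
  assumes char: "(2::'a) \<noteq> 0"
  shows "(gen_subalg (smul_S d) S_a S_b = UNIV \<longleftrightarrow> d \<noteq> 1)
    \<and> (d \<noteq> 1 \<longrightarrow> (\<exists>f. alg_iso f UNIV tadd tsmul (jmul ((1 + d)/2))
                              UNIV tadd tsmul (smul_S d)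
                         \<and> f J_a = S_a \<and> f J_b = S_b))
    \<and> (d = 1 \<longrightarrow>
         gen_subalg (smul_S d) S_a S_b = {tadd (tsmul s S_a) (tsmul t S_b) | s t. True}
       \<and> (\<forall>s t :: 'a. tadd (tsmul s S_a) (tsmul t S_b) = (0,0,0) \<longrightarrow> s = 0 \<and> t = 0)
       \<and> (\<exists>f. alg_iso f Jq_carrier Jq_add Jq_smul Jq_mul
                 (gen_subalg (smul_S d) S_a S_b) tadd tsmul (smul_S d)
              \<and> f (J_coset J_a) = S_a \<and> f (J_coset J_b) = S_b))"
proof (cases "d = 1")
  case True
  then show ?thesis
    unfolding True gen_subalg_S_1_eq_span[OF char]
    using span_S_a_S_b_ne_UNIV[OF char] S_a_S_b_independent[OF char] Jq_alg_iso_span[OF char]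
    by simp
next
  case False
  then show ?thesis
    using gen_subalg_S_eq_UNIV[OF char False] alg_iso_J_to_S[OF char False]
      J_to_S_J_a J_to_S_J_b by blast
qed

end
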